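(* Let $n\geq1$, $0<\sigma<1/2$, and let $\Omega\subset\mathbb{R}^n$ be an open set of finite measure such that $$\big|\{x\in\Omega:\operatorname{dist}(x,\Omega^c)<\delta\}\big|=o(\delta^{2\sigma})\qquad\text{as }\delta\to0.$$ Then $$\inf_{0\not\equiv u\in C^1_c(\Omega)}\frac{I_{n,\sigma,\Omega}[u]}{\big(\int_\Omega|u|^{\frac{2n}{n-2\sigma}}dx\big)^{\frac{n-2\sigma}{n}}}=0.$$
   Context: For an open set $\Omega\subset\mathbb{R}^n$, $I_{n,\sigma,\Omega}[u]=\iint_{\Omega\times\Omega}\frac{(u(x)-u(y))^2}{|x-y|^{n+2\sigma}}\,dx\,dy$; $\Omega^c=\mathbb{R}^n\setminus\Omega$ and $|\cdot|$ denotes Lebesgue measure. *)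

theory Defs
  imports "HOL-Analysis.Analysis" "HOL-Library.Landau_Symbols"
begin

definition C1_on_UNIV :: "('a::euclidean_space \<Rightarrow> real) \<Rightarrow> bool" where
  "C1_on_UNIV u \<longleftrightarrow> (\<exists>D :: 'a \<Rightarrow> ('a \<Rightarrow>\<^sub>L real).
      (\<forall>x. (u has_derivative blinfun_apply (D x)) (at x)) \<and> continuous_on UNIV D)"

definition C1c :: "'a::euclidean_space set \<Rightarrow> ('a \<Rightarrow> real) set" where
  "C1c \<Omega> = {u. C1_on_UNIV u \<and> compact (closure {x. u x \<noteq> 0})
                  \<and> closure {x. u x \<noteq> 0} \<subseteq> \<Omega>}"

definition Iform :: "real \<Rightarrow> 'a::euclidean_space set \<Rightarrow> ('a \<Rightarrow> real) \<Rightarrow> ennreal" where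
  "Iform \<sigma> \<Omega> u = (\<integral>\<^sup>+ z. indicator (\<Omega> \<times> \<Omega>) z *
      ennreal ((u (fst z) - u (snd z))\<^sup>2 / norm (fst z - snd z) powr (real DIM('a) + 2 * \<sigma>))
      \<partial>(lborel :: ('a \<times> 'a) measure))"

definition Sobden :: "real \<Rightarrow> 'a::euclidean_space set \<Rightarrow> ('a \<Rightarrow> real) \<Rightarrow> real" where
  "Sobden \<sigma> \<Omega> u =
     (LINT x : \<Omega> | lborel. \<bar>u x\<bar> powr (2 * real DIM('a) / (real DIM('a) - 2 * \<sigma>)))
       powr ((real DIM('a) - 2 * \<sigma>) / real DIM('a))"

end

theory Submission
  imports Defs
begin

(*
  For small delta let K be the set of points of Omega at distance at least delta from the
  boundary and inside a large ball, so that the rest E = Omega - K has measure o(delta^(2 sigma)).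
  A C^1 cutoff u with values in [0,1], equal to 1 on K, supported in Omega and with Lipschitz
  constant A/delta, where A depends only on the dimension, is glued together from bumps centred
  at a delta/4-separated net of K; a volume packing argument bounds the number of bumps that
  overlap at any point. As u is constant on Omega - E, only pairs with a point in E contribute to
  the double integral, which is therefore at most
    2 |E| (A/delta)^(2 sigma) * integral of min(1, |z|^2) / |z|^(n + 2 sigma) dz = o(1);
  the kernel is integrable because 0 < sigma < 1. Meanwhile u = 1 on a set of measure at least
  |Omega|/2, which keeps the denominator away from zero.
*)

section \<open>Lebesgue measure on Euclidean space\<close>

lemma power_powr_commute: "(0::real) < x \<Longrightarrow> (x ^ j) powr s = (x powr s) ^ j"
  by (simp add: powr_realpow[symmetric] powr_powr mult.commute)

lemma ex_dyadic_interval: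
  fixes t :: real
  assumes "1 \<le> t"
  shows "\<exists>j. 2 ^ j \<le> t \<and> t < 2 ^ Suc j"
proof -
  have "1 \<le> nat \<lfloor>t\<rfloor>" using assms by linarith
  then obtain j where j: "2 ^ j \<le> nat \<lfloor>t\<rfloor>" "nat \<lfloor>t\<rfloor> < 2 ^ (j + 1)"
    using ex_power_ivl1[of 2 "nat \<lfloor>t\<rfloor>"] by auto
  have "real (2 ^ j) \<le> real (nat \<lfloor>t\<rfloor>)" "real (Suc (nat \<lfloor>t\<rfloor>)) \<le> real (2 ^ Suc j)"
    using j by (simp_all only: of_nat_le_iff) simp
  then have "(2::real) ^ j \<le> real (nat \<lfloor>t\<rfloor>)" "real (nat \<lfloor>t\<rfloor>) + 1 \<le> 2 ^ Suc j"
    by simp_all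
  moreover have "real (nat \<lfloor>t\<rfloor>) \<le> t" "t < real (nat \<lfloor>t\<rfloor>) + 1"
    using assms by linarith+
  ultimately show ?thesis by (intro exI[of _ j]) linarith
qed

lemma nn_integral_le_dyadic_shells:
  fixes f :: "'a::euclidean_space \<Rightarrow> real"
  assumes far: "\<And>j z. 2 ^ j \<le> norm z \<Longrightarrow> norm z < 2 ^ Suc j \<Longrightarrow> f z \<le> a j"
    and near: "\<And>j z. (1/2) ^ Suc j < norm z \<Longrightarrow> norm z \<le> (1/2) ^ j \<Longrightarrow> f z \<le> b j"
    and a_nonneg: "\<And>j. 0 \<le> a j" and b_nonneg: "\<And>j. 0 \<le> b j"
  shows "(\<integral>\<^sup>+ z. f z \<partial>lborel) \<le> (\<Sum>j. ennreal (unit_ball_vol DIM('a) *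
           (a j * (2 ^ Suc j) ^ DIM('a) + b j * ((1/2) ^ j) ^ DIM('a))))"
proof -
  define A where "A j = {z::'a. 2 ^ j \<le> norm z \<and> norm z < 2 ^ Suc j}" for j :: nat
  define B where "B j = {z::'a. (1/2) ^ Suc j < norm z \<and> norm z \<le> (1/2) ^ j}" for j :: nat
  define g where "g j z = ennreal (a j) * indicator (A j) z + ennreal (b j) * indicator (B j) z"
    for j :: nat and z :: 'a
  have A_B_sets [measurable]: "A j \<in> sets lborel" "B j \<in> sets lborel" for j
    unfolding A_def B_def by measurable
  have f_le_g: "ennreal (f z) \<le> (\<Sum>j. g j z)" if "z \<noteq> 0" for z
  proof -
    have "\<exists>j. ennreal (f z) \<le> g j z"
    proof (cases "1 \<le> norm z")
      case True
      then obtain j where "2 ^ j \<le> norm z" "norm z < 2 ^ Suc j"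
        using ex_dyadic_interval by blast
      then show ?thesis
        by (intro exI[of _ j]) (simp add: g_def A_def far ennreal_leI add_increasing2)
    next
      case False
      then have "1 \<le> 1 / norm z" using that by (simp add: field_simps)
      then obtain j where j: "2 ^ j \<le> 1 / norm z" "1 / norm z < 2 ^ Suc j"
        using ex_dyadic_interval by blast
      then have "(1/2) ^ Suc j < norm z" "norm z \<le> (1/2) ^ j"
        using that by (simp_all add: field_simps power_one_over)
      then show ?thesis
        by (intro exI[of _ j]) (simp add: g_def B_def near ennreal_leI add_increasing)
    qed
    then obtain j where "ennreal (f z) \<le> g j z" ..
    also have "\<dots> \<le> (\<Sum>j. g j z)"
      using sum_le_suminf[of "\<lambda>j. g j z" "{j}"] by simp
    finally show ?thesis .
  qed
  have int_g: "(\<integral>\<^sup>+ z. g j z \<partial>lborel) \<le> ennreal (unit_ball_vol DIM('a) *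
           (a j * (2 ^ Suc j) ^ DIM('a) + b j * ((1/2) ^ j) ^ DIM('a)))" for j
  proof -
    have "(\<integral>\<^sup>+ z. g j z \<partial>lborel) = (\<integral>\<^sup>+ z. ennreal (a j) * indicator (A j) z \<partial>lborel)
        + (\<integral>\<^sup>+ z. ennreal (b j) * indicator (B j) z \<partial>lborel)"
      unfolding g_def by (rule nn_integral_add) auto
    also have "\<dots> = ennreal (a j) * emeasure lborel (A j) + ennreal (b j) * emeasure lborel (B j)"
      by (simp only: nn_integral_cmult_indicator A_B_sets)
    also have "\<dots> \<le> ennreal (a j) * emeasure lborel (ball (0::'a) (2 ^ Suc j))
        + ennreal (b j) * emeasure lborel (cball (0::'a) ((1/2) ^ j))"
      by (intro add_mono mult_left_mono emeasure_mono) (auto simp: A_def B_def)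
    also have "\<dots> = ennreal (unit_ball_vol DIM('a) *
           (a j * (2 ^ Suc j) ^ DIM('a) + b j * ((1/2) ^ j) ^ DIM('a)))"
      using a_nonneg[of j] b_nonneg[of j]
      by (simp add: emeasure_ball emeasure_cball ennreal_mult'[symmetric] ennreal_plus[symmetric]
          algebra_simps del: ennreal_plus)
    finally show ?thesis .
  qed
  have "(\<integral>\<^sup>+ z. f z \<partial>lborel) \<le> (\<integral>\<^sup>+ z. (\<Sum>j. g j z) \<partial>lborel)"
    using AE_lborel_singleton[of 0] by (intro nn_integral_mono_AE) (auto elim!: eventually_mono f_le_g)
  also have "\<dots> = (\<Sum>j. \<integral>\<^sup>+ z. g j z \<partial>lborel)"
    by (rule nn_integral_suminf) (simp add: g_def)
  also have "\<dots> \<le> (\<Sum>j. ennreal (unit_ball_vol DIM('a) *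
           (a j * (2 ^ Suc j) ^ DIM('a) + b j * ((1/2) ^ j) ^ DIM('a))))"
    by (intro suminf_le int_g) auto
  finally show ?thesis .
qed

lemma nn_integral_lborel_scale:
  fixes f :: "'a::euclidean_space \<Rightarrow> ennreal"
  assumes [measurable]: "f \<in> borel_measurable borel" and "0 < c"
  shows "(\<integral>\<^sup>+ x. f x \<partial>lborel) = ennreal (c ^ DIM('a)) * (\<integral>\<^sup>+ x. f (c *\<^sub>R x) \<partial>lborel)"
proof -
  have "(\<integral>\<^sup>+ x. f x \<partial>lborel)
      = (\<integral>\<^sup>+ x. f x \<partial>density (distr lborel borel (\<lambda>x. 0 + c *\<^sub>R x)) (\<lambda>_. \<bar>c\<bar> ^ DIM('a)))"
    using lborel_affine[of c "0::'a"] assms by simp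
  also have "\<dots> = ennreal (c ^ DIM('a)) * (\<integral>\<^sup>+ x. f (c *\<^sub>R x) \<partial>lborel)"
    using assms by (simp add: nn_integral_density nn_integral_distr nn_integral_cmult)
  finally show ?thesis .
qed

lemma nn_integral_lborel_translate:
  fixes f :: "'a::euclidean_space \<Rightarrow> ennreal"
  assumes [measurable]: "f \<in> borel_measurable borel"
  shows "(\<integral>\<^sup>+ y. f (y - x) \<partial>lborel) = (\<integral>\<^sup>+ w. f w \<partial>lborel)"
proof -
  have "(\<integral>\<^sup>+ w. f w \<partial>lborel) = (\<integral>\<^sup>+ w. f w \<partial>distr lborel borel ((+) (- x)))"
    by (simp add: lborel_distr_plus)
  also have "\<dots> = (\<integral>\<^sup>+ y. f (y - x) \<partial>lborel)"
    by (simp add: nn_integral_distr)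
  finally show ?thesis ..
qed

lemma nn_integral_indicator_times_translate:
  fixes k :: "'a::euclidean_space \<Rightarrow> ennreal"
  assumes [measurable]: "k \<in> borel_measurable borel" "E \<in> sets lborel"
  shows "(\<integral>\<^sup>+ x. \<integral>\<^sup>+ y. indicator E x * k (y - x) \<partial>lborel \<partial>lborel)
       = emeasure lborel E * (\<integral>\<^sup>+ w. k w \<partial>lborel)"
proof -
  have "(\<integral>\<^sup>+ x. \<integral>\<^sup>+ y. indicator E x * k (y - x) \<partial>lborel \<partial>lborel)
      = (\<integral>\<^sup>+ x. indicator E x * (\<integral>\<^sup>+ w. k w \<partial>lborel) \<partial>lborel)"
    by (simp add: nn_integral_cmult nn_integral_lborel_translate)
  also have "\<dots> = emeasure lborel E * (\<integral>\<^sup>+ w. k w \<partial>lborel)"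
    by (simp add: nn_integral_multc nn_integral_indicator[OF assms(2)])
  finally show ?thesis .
qed

lemma emeasure_diff_cball_small:
  fixes \<Omega> :: "'a::euclidean_space set"
  assumes "\<Omega> \<in> sets lborel" and "emeasure lborel \<Omega> < \<infinity>" and "0 < e"
  obtains R where "emeasure lborel (\<Omega> - cball 0 R) < e"
proof -
  define T where "T k = \<Omega> - cball 0 (real k)" for k :: nat
  have "(\<lambda>k. emeasure lborel (T k)) \<longlonglongrightarrow> emeasure lborel (\<Inter> (range T))"
  proof (rule Lim_emeasure_decseq)
    show "range T \<subseteq> sets lborel" using assms(1) by (auto simp: T_def)
    show "antimono_on UNIV T" unfolding monotone_on_def T_def by auto
    show "emeasure lborel (T k) \<noteq> \<infinity>" for k
      using emeasure_mono[of "T k" \<Omega> lborel, OF _ assms(1)] assms(2) by (auto simp: T_def top_unique)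
  qed
  moreover have "\<Inter> (range T) = {}"
    using real_nat_ceiling_ge by (fastforce simp: T_def)
  ultimately have "(\<lambda>k. emeasure lborel (T k)) \<longlonglongrightarrow> 0" by simp
  then have "\<forall>\<^sub>F k in sequentially. emeasure lborel (T k) < e"
    using assms(3) by (intro order_tendstoD) auto
  then obtain k where "emeasure lborel (T k) < e"
    by (auto dest: eventually_happens)
  then show ?thesis using that by (auto simp: T_def)
qed

lemma measure_pos_if_open:
  fixes \<Omega> :: "'a::euclidean_space set"
  assumes "open \<Omega>" "\<Omega> \<noteq> {}" "emeasure lborel \<Omega> < \<infinity>"
  shows "0 < measure lborel \<Omega>"
proof -
  obtain x r where "0 < r" "ball x r \<subseteq> \<Omega>"
    using assms(1,2) open_contains_ball by blast
  have "0 < emeasure lborel (ball x r)"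
    using \<open>0 < r\<close> by (simp add: emeasure_ball)
  also have "\<dots> \<le> emeasure lborel \<Omega>"
    using \<open>ball x r \<subseteq> \<Omega>\<close> assms(1) by (intro emeasure_mono) auto
  also have "\<dots> = ennreal (measure lborel \<Omega>)"
    using assms(3) by (simp add: emeasure_eq_ennreal_measure)
  finally show ?thesis by simp
qed

section \<open>A majorant of the Gagliardo integrand\<close>

definition lipschitz_kernel :: "real \<Rightarrow> real \<Rightarrow> 'a::euclidean_space \<Rightarrow> real" where
  "lipschitz_kernel M \<sigma> z = min 1 (M\<^sup>2 * (norm z)\<^sup>2) / norm z powr (real DIM('a) + 2 * \<sigma>)"

lemma lipschitz_kernel_nonneg: "0 \<le> lipschitz_kernel M \<sigma> z"
  unfolding lipschitz_kernel_def by simp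

lemma lipschitz_kernel_measurable [measurable]: "lipschitz_kernel M \<sigma> \<in> borel_measurable borel"
  unfolding lipschitz_kernel_def by measurable

lemma lipschitz_kernel_minus_commute: "lipschitz_kernel M \<sigma> (x - y) = lipschitz_kernel M \<sigma> (y - x)"
  by (simp add: lipschitz_kernel_def norm_minus_commute)

lemma lipschitz_kernel_le_far:
  fixes z :: "'a::euclidean_space"
  assumes "0 \<le> \<sigma>" "0 < r" "r \<le> norm z"
  shows "lipschitz_kernel 1 \<sigma> z \<le> 1 / r powr (real DIM('a) + 2 * \<sigma>)"
proof -
  have "lipschitz_kernel 1 \<sigma> z \<le> 1 / norm z powr (real DIM('a) + 2 * \<sigma>)"
    unfolding lipschitz_kernel_def by (intro divide_right_mono) auto
  also have "\<dots> \<le> 1 / r powr (real DIM('a) + 2 * \<sigma>)"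
    using assms by (intro divide_left_mono powr_mono2 mult_pos_pos) auto
  finally show ?thesis .
qed

lemma lipschitz_kernel_le_near:
  fixes z :: "'a::euclidean_space"
  assumes "\<sigma> \<le> 1" "0 < r" "r \<le> norm z" "norm z \<le> R" "R \<le> 1"
  shows "lipschitz_kernel 1 \<sigma> z \<le> R powr (2 - 2 * \<sigma>) / r ^ DIM('a)"
proof -
  define t where "t = norm z"
  have t: "0 < t" "t \<le> 1" using assms by (auto simp: t_def)
  have "min 1 (t\<^sup>2) = t\<^sup>2" using t by (simp add: power_le_one)
  also have "\<dots> = t powr (2 - 2 * \<sigma>) * t powr (2 * \<sigma>)"
    using t by (simp flip: powr_add powr_numeral)
  moreover have "t powr (real DIM('a) + 2 * \<sigma>) = t ^ DIM('a) * t powr (2 * \<sigma>)"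
    using t by (simp add: powr_add powr_realpow)
  ultimately have "lipschitz_kernel 1 \<sigma> z = t powr (2 - 2 * \<sigma>) / t ^ DIM('a)"
    using t by (simp add: lipschitz_kernel_def t_def)
  also have "\<dots> \<le> R powr (2 - 2 * \<sigma>) / r ^ DIM('a)"
    using assms t by (intro frac_le powr_mono2 power_mono) (auto simp: t_def)
  finally show ?thesis .
qed

lemma nn_integral_lipschitz_kernel_finite:
  assumes "0 < \<sigma>" "\<sigma> < 1"
  shows "(\<integral>\<^sup>+ z. lipschitz_kernel 1 \<sigma> (z::'a::euclidean_space) \<partial>lborel) < \<infinity>"
proof -
  define n where "n = DIM('a)"
  define a where "a j = 1 / (2 ^ j) powr (real n + 2 * \<sigma>)" for j :: nat
  define b where "b j = ((1/2) ^ j) powr (2 - 2 * \<sigma>) / ((1/2) ^ Suc j) ^ n" for j :: nat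
  define r\<^sub>1 where "r\<^sub>1 = inverse (2 powr (2 * \<sigma>))"
  define r\<^sub>2 where "r\<^sub>2 = (1/2::real) powr (2 - 2 * \<sigma>)"
  have "(1::real) < 2 powr (2 * \<sigma>)" using assms by simp
  then have r\<^sub>1: "0 \<le> r\<^sub>1" "r\<^sub>1 < 1" by (auto simp: r\<^sub>1_def inverse_less_1_iff)
  have "(1/2::real) powr (2 - 2 * \<sigma>) < 1 powr (2 - 2 * \<sigma>)"
    using assms by (intro powr_less_mono2) auto
  then have r\<^sub>2: "0 \<le> r\<^sub>2" "r\<^sub>2 < 1" by (auto simp: r\<^sub>2_def)
  have term_eq: "unit_ball_vol n * (a j * (2 ^ Suc j) ^ n + b j * ((1/2) ^ j) ^ n)
      = unit_ball_vol n * 2 ^ n * (r\<^sub>1 ^ j + r\<^sub>2 ^ j)" for j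
  proof -
    have "(2 ^ j) powr (real n + 2 * \<sigma>) = (2 ^ j) ^ n * (2 powr (2 * \<sigma>)) ^ j"
      by (simp add: powr_add powr_realpow power_powr_commute)
    moreover have "((1/2::real) ^ j) powr (2 - 2 * \<sigma>) = r\<^sub>2 ^ j"
      by (simp add: r\<^sub>2_def power_powr_commute)
    ultimately show ?thesis
      by (simp add: a_def b_def r\<^sub>1_def field_simps power_inverse power_mult_distrib)
  qed
  have "(\<integral>\<^sup>+ z. lipschitz_kernel 1 \<sigma> (z::'a) \<partial>lborel)
      \<le> (\<Sum>j. ennreal (unit_ball_vol n * 2 ^ n * (r\<^sub>1 ^ j + r\<^sub>2 ^ j)))"
    unfolding n_def term_eq[unfolded n_def, symmetric]
  proof (rule nn_integral_le_dyadic_shells)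
    show "lipschitz_kernel 1 \<sigma> z \<le> a j" if "2 ^ j \<le> norm z" for j and z :: 'a
      using lipschitz_kernel_le_far[OF _ _ that] assms by (simp add: a_def n_def)
    show "lipschitz_kernel 1 \<sigma> z \<le> b j"
      if "(1/2) ^ Suc j < norm z" "norm z \<le> (1/2) ^ j" for j and z :: 'a
      using lipschitz_kernel_le_near[of \<sigma> "(1/2) ^ Suc j" z "(1/2) ^ j"] that assms
      by (simp add: b_def n_def power_le_one)
  qed (simp_all add: a_def b_def)
  also have "\<dots> = ennreal (\<Sum>j. unit_ball_vol n * 2 ^ n * (r\<^sub>1 ^ j + r\<^sub>2 ^ j))"
    using r\<^sub>1 r\<^sub>2 by (intro suminf_ennreal2 summable_mult summable_add summable_geometric) auto
  finally show ?thesis by (simp add: top.not_eq_extremum le_less_trans)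
qed

lemma lipschitz_kernel_scale:
  fixes z :: "'a::euclidean_space"
  assumes "0 < M"
  shows "lipschitz_kernel M \<sigma> z = M powr (real DIM('a) + 2 * \<sigma>) * lipschitz_kernel 1 \<sigma> (M *\<^sub>R z)"
proof -
  have "norm (M *\<^sub>R z) powr (real DIM('a) + 2 * \<sigma>)
      = M powr (real DIM('a) + 2 * \<sigma>) * norm z powr (real DIM('a) + 2 * \<sigma>)"
    using assms by (simp add: powr_mult)
  moreover have "(norm (M *\<^sub>R z))\<^sup>2 = M\<^sup>2 * (norm z)\<^sup>2"
    using assms by (simp add: power_mult_distrib)
  ultimately show ?thesis
    using assms by (simp add: lipschitz_kernel_def)
qed

lemma nn_integral_lipschitz_kernel:
  assumes "0 < M"
  shows "(\<integral>\<^sup>+ z. lipschitz_kernel M \<sigma> (z::'a::euclidean_space) \<partial>lborel)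
       = ennreal (M powr (2 * \<sigma>)) * (\<integral>\<^sup>+ z. lipschitz_kernel 1 \<sigma> (z::'a) \<partial>lborel)"
proof -
  let ?e = "real DIM('a) + 2 * \<sigma>"
  let ?I = "\<integral>\<^sup>+ z. lipschitz_kernel 1 \<sigma> (M *\<^sub>R (z::'a)) \<partial>lborel"
  have "ennreal (lipschitz_kernel M \<sigma> z) = ennreal (M powr ?e) * lipschitz_kernel 1 \<sigma> (M *\<^sub>R z)"
    for z :: 'a
    unfolding lipschitz_kernel_scale[OF assms] by (rule ennreal_mult) (simp_all add: lipschitz_kernel_nonneg)
  then have "(\<integral>\<^sup>+ z. lipschitz_kernel M \<sigma> (z::'a) \<partial>lborel) = ennreal (M powr ?e) * ?I"
    by (simp add: nn_integral_cmult)
  also have "\<dots> = ennreal (M powr (2 * \<sigma>)) * (ennreal (M ^ DIM('a)) * ?I)"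
    using assms by (simp add: powr_add powr_realpow mult.commute flip: ennreal_mult mult.assoc)
  also have "ennreal (M ^ DIM('a)) * ?I = (\<integral>\<^sup>+ z. lipschitz_kernel 1 \<sigma> (z::'a) \<partial>lborel)"
    by (rule nn_integral_lborel_scale[symmetric]) (use assms in simp_all)
  finally show ?thesis .
qed

lemma sq_diff_div_le_lipschitz_kernel:
  fixes u :: "'a::euclidean_space \<Rightarrow> real"
  assumes "\<bar>u x - u y\<bar> \<le> M * dist x y" and "\<bar>u x - u y\<bar> \<le> 1"
  shows "(u x - u y)\<^sup>2 / norm (x - y) powr (real DIM('a) + 2 * \<sigma>) \<le> lipschitz_kernel M \<sigma> (x - y)"
proof -
  have "\<bar>u x - u y\<bar>\<^sup>2 \<le> (M * norm (x - y))\<^sup>2"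
    using assms(1) by (intro power_mono) (auto simp: dist_norm)
  moreover have "(u x - u y)\<^sup>2 \<le> 1"
    using assms(2) by (simp add: abs_square_le_1)
  ultimately have "(u x - u y)\<^sup>2 \<le> min 1 (M\<^sup>2 * (norm (x - y))\<^sup>2)"
    by (simp add: power_mult_distrib)
  then show ?thesis
    unfolding lipschitz_kernel_def by (intro divide_right_mono) auto
qed

lemma Iform_le_lipschitz_kernel:
  fixes u :: "'a::euclidean_space \<Rightarrow> real"
  assumes "0 < M" and lip: "\<And>x y. \<bar>u x - u y\<bar> \<le> M * dist x y"
    and osc: "\<And>x y. \<bar>u x - u y\<bar> \<le> 1"
    and E [measurable]: "E \<in> sets lborel"
    and const: "\<And>x y. x \<in> \<Omega> \<Longrightarrow> y \<in> \<Omega> \<Longrightarrow> x \<notin> E \<Longrightarrow> y \<notin> E \<Longrightarrow> u x = u y"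
  shows "Iform \<sigma> \<Omega> u \<le> 2 * emeasure lborel E *
           (ennreal (M powr (2 * \<sigma>)) * (\<integral>\<^sup>+ z. lipschitz_kernel 1 \<sigma> (z::'a) \<partial>lborel))"
proof -
  define k where "k w = ennreal (lipschitz_kernel M \<sigma> w)" for w :: 'a
  have [measurable]: "k \<in> borel_measurable borel" unfolding k_def by measurable
  have k_commute: "k (x - y) = k (y - x)" for x y
    by (simp add: k_def lipschitz_kernel_minus_commute)
  have Fubini: "(\<integral>\<^sup>+ x. \<integral>\<^sup>+ y. indicator E y * k (x - y) \<partial>lborel \<partial>lborel)
      = (\<integral>\<^sup>+ y. \<integral>\<^sup>+ x. indicator E y * k (x - y) \<partial>lborel \<partial>lborel)"
    by (rule lborel_pair.Fubini'[symmetric]) simp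
  have pointwise: "indicator (\<Omega> \<times> \<Omega>) z * ennreal ((u (fst z) - u (snd z))\<^sup>2
          / norm (fst z - snd z) powr (real DIM('a) + 2 * \<sigma>))
      \<le> indicator E (fst z) * k (snd z - fst z) + indicator E (snd z) * k (fst z - snd z)"
    for z :: "'a \<times> 'a"
  proof (cases "z \<in> \<Omega> \<times> \<Omega> \<and> (fst z \<in> E \<or> snd z \<in> E)")
    case True
    then have "ennreal ((u (fst z) - u (snd z))\<^sup>2 / norm (fst z - snd z) powr (real DIM('a) + 2 * \<sigma>))
        \<le> k (fst z - snd z)"
      unfolding k_def by (intro ennreal_leI sq_diff_div_le_lipschitz_kernel lip osc)
    then show ?thesis
      using True by (auto simp: indicator_def k_commute[of "fst z"] intro: add_increasing2 add_increasing)
  next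
    case False
    then show ?thesis using const[of "fst z" "snd z"] by (cases "z \<in> \<Omega> \<times> \<Omega>") auto
  qed
  have "Iform \<sigma> \<Omega> u \<le> (\<integral>\<^sup>+ z. indicator E (fst z) * k (snd z - fst z)
      + indicator E (snd z) * k (fst z - snd z) \<partial>(lborel \<Otimes>\<^sub>M lborel))"
    unfolding Iform_def lborel_prod by (rule nn_integral_mono) (rule pointwise)
  also have "\<dots> = (\<integral>\<^sup>+ x. \<integral>\<^sup>+ y. indicator E x * k (y - x) \<partial>lborel \<partial>lborel)
      + (\<integral>\<^sup>+ y. \<integral>\<^sup>+ x. indicator E y * k (x - y) \<partial>lborel \<partial>lborel)"
    by (simp add: nn_integral_add lborel.nn_integral_fst[symmetric] Fubini)
  also have "\<dots> = 2 * emeasure lborel E * (\<integral>\<^sup>+ w. k w \<partial>lborel)"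
    by (subst (1 2) nn_integral_indicator_times_translate) (use E in \<open>simp_all add: mult_2 algebra_simps\<close>)
  also have "(\<integral>\<^sup>+ w. k w \<partial>lborel)
      = ennreal (M powr (2 * \<sigma>)) * (\<integral>\<^sup>+ z. lipschitz_kernel 1 \<sigma> (z::'a) \<partial>lborel)"
    unfolding k_def using assms(1) by (rule nn_integral_lipschitz_kernel)
  finally show ?thesis .
qed

section \<open>Cutoff functions built on separated nets\<close>

lemma card_separated_le_card_cover:
  fixes P :: "'a::metric_space set"
  assumes "finite C" "P \<subseteq> (\<Union>c\<in>C. ball c (h/2))"
    and sep: "\<forall>p\<in>P. \<forall>q\<in>P. p \<noteq> q \<longrightarrow> h \<le> dist p q"
  shows "finite P \<and> card P \<le> card C"
proof -
  have "\<forall>p\<in>P. \<exists>c\<in>C. dist p c < h/2"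
    using assms(2) by (force simp: dist_commute)
  then obtain f where f: "\<And>p. p \<in> P \<Longrightarrow> f p \<in> C \<and> dist p (f p) < h/2" by metis
  have "inj_on f P"
  proof (rule inj_onI, rule ccontr)
    fix p q assume pq: "p \<in> P" "q \<in> P" "f p = f q" "p \<noteq> q"
    have "dist p q \<le> dist p (f p) + dist q (f q)"
      using pq(3) by (metis dist_commute dist_triangle)
    then show False using sep f[OF pq(1)] f[OF pq(2)] pq by force
  qed
  moreover have "f ` P \<subseteq> C" using f by auto
  ultimately have "finite P" using assms(1) finite_imageD finite_subset by blast
  moreover have "card P \<le> card C"
    using card_mono[OF assms(1) \<open>f ` P \<subseteq> C\<close>] card_image[OF \<open>inj_on f P\<close>] by simp
  ultimately show ?thesis ..
qed

lemma compact_has_separated_net: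
  fixes K :: "'a::metric_space set"
  assumes "compact K" "0 < h"
  obtains P where "finite P" "P \<subseteq> K" "\<And>x. x \<in> K \<Longrightarrow> \<exists>p\<in>P. dist x p < h"
    "\<forall>p\<in>P. \<forall>q\<in>P. p \<noteq> q \<longrightarrow> h \<le> dist p q"
proof -
  obtain C where "finite C" and C: "K \<subseteq> (\<Union>c\<in>C. ball c (h/2))"
    using compactE_image[OF assms(1), of K "\<lambda>c. ball c (h/2)"] assms(2)
    by (metis (no_types, lifting) UN_I centre_in_ball half_gt_zero open_ball subsetI)
  define Sep where "Sep P \<longleftrightarrow> P \<subseteq> K \<and> (\<forall>p\<in>P. \<forall>q\<in>P. p \<noteq> q \<longrightarrow> h \<le> dist p q)" for P
  have bound: "finite P \<and> card P \<le> card C" if "Sep P" for P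
    using that card_separated_le_card_cover[OF \<open>finite C\<close>, of P] C by (auto simp: Sep_def)
  have "Sep {}" by (simp add: Sep_def)
  then obtain P where P: "Sep P" and max: "\<And>Q. Sep Q \<Longrightarrow> card Q \<le> card P"
    using ex_has_greatest_nat[of Sep "{}" card "Suc (card C)"] bound by force
  have "\<exists>p\<in>P. dist x p < h" if "x \<in> K" for x
  proof (rule ccontr)
    assume "\<not> (\<exists>p\<in>P. dist x p < h)"
    then have "\<forall>p\<in>P. h \<le> dist x p" by auto
    then have "Sep (insert x P)" "x \<notin> P"
      using P that assms(2) unfolding Sep_def by (auto simp: dist_commute)
    then show False using max[of "insert x P"] bound[OF P] by simp
  qed
  then show ?thesis
    using P bound[OF P] by (intro that) (auto simp: Sep_def)
qed

lemma disjoint_family_on_separated_balls: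
  assumes "\<forall>p\<in>P. \<forall>q\<in>P. p \<noteq> q \<longrightarrow> h \<le> dist p q"
  shows "disjoint_family_on (\<lambda>p. ball p (h/2)) P"
  unfolding disjoint_family_on_def
proof (intro ballI impI equals0I)
  fix p q y assume "p \<in> P" "q \<in> P" "p \<noteq> q" "y \<in> ball p (h/2) \<inter> ball q (h/2)"
  moreover have "dist p q \<le> dist p y + dist q y" using dist_triangle3[of p q y] by (simp add: dist_commute)
  ultimately show False using assms by force
qed

lemma card_separated_in_ball_le:
  fixes P :: "'a::euclidean_space set"
  assumes "0 < h" "finite P" and sep: "\<forall>p\<in>P. \<forall>q\<in>P. p \<noteq> q \<longrightarrow> h \<le> dist p q"
  shows "card {p\<in>P. dist x p < 2 * h} \<le> 5 ^ DIM('a)"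
proof -
  define Q where "Q = {p\<in>P. dist x p < 2 * h}"
  define v where "v = unit_ball_vol (real DIM('a)) * (h/2) ^ DIM('a)"
  have "0 < v" using assms(1) by (simp add: v_def)
  have "(\<Union>p\<in>Q. ball p (h/2)) \<subseteq> ball x (5 * h / 2)"
  proof
    fix y assume "y \<in> (\<Union>p\<in>Q. ball p (h/2))"
    then obtain p where "p \<in> Q" "dist p y < h/2" by auto
    then show "y \<in> ball x (5 * h / 2)"
      using dist_triangle[of x y p] by (auto simp: Q_def)
  qed
  moreover have "disjoint_family_on (\<lambda>p. ball p (h/2)) Q"
    using disjoint_family_on_separated_balls[OF sep] by (auto simp: Q_def disjoint_family_on_def)
  ultimately have "(\<Sum>p\<in>Q. emeasure lborel (ball p (h/2))) \<le> emeasure lborel (ball x (5 * h / 2))"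
    using assms(2) by (subst sum_emeasure) (auto simp: Q_def intro: emeasure_mono)
  then have "ennreal (real (card Q) * v) \<le> ennreal (5 ^ DIM('a) * v)"
    using \<open>0 < v\<close> assms(1) by (simp add: emeasure_ball v_def power_mult_distrib[symmetric]
        ennreal_of_nat_eq_real_of_nat mult_ac flip: ennreal_mult)
  then have "real (card Q) \<le> 5 ^ DIM('a)"
    using \<open>0 < v\<close> by (simp add: ennreal_le_iff)
  then show ?thesis unfolding Q_def by (simp flip: of_nat_le_iff)
qed

definition pos_part_sq :: "real \<Rightarrow> real" where
  "pos_part_sq t = (max 0 t)\<^sup>2"

lemma pos_part_sq_nonneg: "0 \<le> pos_part_sq t"
  by (simp add: pos_part_sq_def)

lemma continuous_on_pos_part_sq [continuous_intros]:
  "continuous_on S g \<Longrightarrow> continuous_on S (\<lambda>x. pos_part_sq (g x))"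
  unfolding pos_part_sq_def by (intro continuous_intros)

lemma pos_part_sq_has_real_derivative: "(pos_part_sq has_real_derivative 2 * max 0 t) (at t)"
proof -
  consider "t < 0" | "t = 0" | "0 < t" by linarith
  then show ?thesis
  proof cases
    case 1
    have "\<forall>\<^sub>F s in nhds t. pos_part_sq s = 0"
      using eventually_nhds_in_open[of "{..<0}" t] 1 by (auto elim!: eventually_mono simp: pos_part_sq_def)
    then show ?thesis
      using 1 by (subst DERIV_cong_ev[OF refl]) (auto intro!: derivative_eq_intros)
  next
    case 2
    have "(pos_part_sq s - pos_part_sq 0) / s = max 0 s" if "s \<noteq> 0" for s
      using that by (cases "0 < s") (auto simp: pos_part_sq_def power2_eq_square max_def)
    then have "\<forall>\<^sub>F s in at 0. (pos_part_sq (0 + s) - pos_part_sq 0) / s = max 0 s"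
      by (simp add: eventually_at_filter)
    moreover have "((\<lambda>s::real. max 0 s) \<longlongrightarrow> 0) (at 0)"
      using tendsto_max[OF tendsto_const tendsto_ident_at, of 0 0 UNIV] by simp
    ultimately show ?thesis
      using 2 by (simp add: DERIV_def tendsto_cong)
  next
    case 3
    have "\<forall>\<^sub>F s in nhds t. pos_part_sq s = s\<^sup>2"
      using eventually_nhds_in_open[of "{0<..}" t] 3 by (auto elim!: eventually_mono simp: pos_part_sq_def)
    then show ?thesis
      using 3 by (subst DERIV_cong_ev[OF refl]) (auto intro!: derivative_eq_intros)
  qed
qed

lemma has_derivative_pos_part_sq [derivative_intros]:
  assumes "(g has_derivative g') (at x)"
  shows "((\<lambda>y. pos_part_sq (g y)) has_derivative (\<lambda>v. 2 * max 0 (g x) * g' v)) (at x)"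
  using has_derivative_compose[OF assms
      has_field_derivative_imp_has_derivative[OF pos_part_sq_has_real_derivative]]
  by simp

(* Each bump is at least 1 within distance h of its centre and vanishes beyond 2h; composing
   with t \<mapsto> 1 - (1 - t)\<^sub>+\<^sup>2 caps the sum at 1 without losing differentiability. *)
definition net_bump :: "'a::euclidean_space set \<Rightarrow> real \<Rightarrow> 'a \<Rightarrow> real" where
  "net_bump P h x = (\<Sum>p\<in>P. pos_part_sq (4 - ((x - p) \<bullet> (x - p)) / h\<^sup>2) / 9)"

definition net_cutoff :: "'a::euclidean_space set \<Rightarrow> real \<Rightarrow> 'a \<Rightarrow> real" where
  "net_cutoff P h x = 1 - pos_part_sq (1 - net_bump P h x)"

definition net_cutoff_coeff :: "'a::euclidean_space set \<Rightarrow> real \<Rightarrow> 'a \<Rightarrow> 'a \<Rightarrow> real" where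
  "net_cutoff_coeff P h p x =
     - 8 * max 0 (1 - net_bump P h x) * max 0 (4 - ((x - p) \<bullet> (x - p)) / h\<^sup>2) / (9 * h\<^sup>2)"

lemma net_bump_nonneg: "0 \<le> net_bump P h x"
  unfolding net_bump_def by (intro sum_nonneg) (simp add: pos_part_sq_nonneg)

lemma inner_diff_self_div: "(x - p) \<bullet> (x - p) / h\<^sup>2 = (dist x p / h)\<^sup>2"
  by (simp add: dist_norm power_divide power2_norm_eq_inner)

lemma has_derivative_net_bump:
  assumes "h \<noteq> 0"
  shows "(net_bump P h has_derivative (\<lambda>v. \<Sum>p\<in>P.
            - 4 * max 0 (4 - ((x - p) \<bullet> (x - p)) / h\<^sup>2) / (9 * h\<^sup>2) * ((x - p) \<bullet> v))) (at x)"
  unfolding net_bump_def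
  by (rule has_derivative_eq_rhs, (rule derivative_eq_intros refl)+)
     (use assms in \<open>auto simp: inner_commute field_simps intro!: ext sum.cong\<close>)

lemma has_derivative_net_cutoff:
  assumes "h \<noteq> 0"
  shows "(net_cutoff P h has_derivative (\<lambda>v. \<Sum>p\<in>P. net_cutoff_coeff P h p x * ((x - p) \<bullet> v))) (at x)"
  unfolding net_cutoff_def
  by (rule has_derivative_eq_rhs, (rule derivative_eq_intros has_derivative_net_bump[OF assms] refl)+)
     (auto simp: net_cutoff_coeff_def sum_distrib_left field_simps intro!: ext sum.cong)

lemma C1_on_UNIV_net_cutoff:
  assumes "h \<noteq> 0"
  shows "C1_on_UNIV (net_cutoff P h)"
  unfolding C1_on_UNIV_def
proof (intro exI conjI allI)
  let ?D = "\<lambda>x. \<Sum>p\<in>P. net_cutoff_coeff P h p x *\<^sub>R blinfun_inner_left (x - p)"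
  show "(net_cutoff P h has_derivative blinfun_apply (?D x)) (at x)" for x
  proof -
    have "blinfun_apply (?D x) = (\<lambda>v. \<Sum>p\<in>P. net_cutoff_coeff P h p x * ((x - p) \<bullet> v))"
      by (simp add: fun_eq_iff blinfun.sum_left blinfun.scaleR_left inner_commute)
    then show ?thesis using has_derivative_net_cutoff[OF assms] by simp
  qed
  show "continuous_on UNIV ?D"
    unfolding net_cutoff_coeff_def net_bump_def by (intro continuous_intros) (use assms in auto)
qed

lemma net_cutoff_bounds: "0 \<le> net_cutoff P h x \<and> net_cutoff P h x \<le> 1"
proof (cases "1 \<le> net_bump P h x")
  case False
  then have "pos_part_sq (1 - net_bump P h x) \<le> 1"
    using net_bump_nonneg[of P h x] by (simp add: pos_part_sq_def abs_square_le_1)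
  then show ?thesis by (simp add: net_cutoff_def pos_part_sq_nonneg)
qed (simp add: net_cutoff_def pos_part_sq_def)

lemma net_cutoff_eq_one:
  assumes "finite P" "p \<in> P" "dist x p < h"
  shows "net_cutoff P h x = 1"
proof -
  have "0 < h" using assms(3) zero_le_dist[of x p] by linarith
  then have "0 \<le> dist x p / h" "dist x p / h < 1"
    using assms by (auto simp: divide_less_eq_1)
  then have "(dist x p / h)\<^sup>2 < 1"
    by (simp add: abs_square_less_1)
  then have "3\<^sup>2 \<le> (4 - (dist x p / h)\<^sup>2)\<^sup>2"
    by (intro power_mono) auto
  then have "9 \<le> pos_part_sq (4 - (x - p) \<bullet> (x - p) / h\<^sup>2)"
    using \<open>(dist x p / h)\<^sup>2 < 1\<close> by (simp add: inner_diff_self_div pos_part_sq_def)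
  also have "\<dots> \<le> 9 * net_bump P h x"
    unfolding net_bump_def sum_distrib_left
    using member_le_sum[OF assms(2), of "\<lambda>q. pos_part_sq (4 - (x - q) \<bullet> (x - q) / h\<^sup>2)"] assms(1)
    by (simp add: pos_part_sq_nonneg)
  finally show ?thesis by (simp add: net_cutoff_def pos_part_sq_def)
qed

lemma net_cutoff_nonzero_near:
  assumes "0 < h" "net_cutoff P h x \<noteq> 0"
  shows "\<exists>p\<in>P. dist x p < 2 * h"
proof (rule ccontr)
  assume "\<not> (\<exists>p\<in>P. dist x p < 2 * h)"
  then have "2 \<le> dist x p / h" if "p \<in> P" for p
    using that assms(1) by (auto simp: le_divide_eq mult.commute)
  then have "2\<^sup>2 \<le> (dist x p / h)\<^sup>2" if "p \<in> P" for p
    using that by (intro power_mono) auto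
  then have "net_bump P h x = 0"
    unfolding net_bump_def inner_diff_self_div by (intro sum.neutral) (auto simp: pos_part_sq_def)
  with assms(2) show False by (simp add: net_cutoff_def pos_part_sq_def)
qed

lemma net_cutoff_coeff_bound:
  assumes "0 < h"
  shows "\<bar>net_cutoff_coeff P h p x\<bar> * norm (x - p) \<le> (if dist x p < 2 * h then 64 / (9 * h) else 0)"
proof (cases "dist x p < 2 * h")
  case False
  then have "2 \<le> dist x p / h" using assms by (simp add: le_divide_eq mult.commute)
  then have "2\<^sup>2 \<le> (dist x p / h)\<^sup>2" by (intro power_mono) auto
  then show ?thesis using False by (simp add: net_cutoff_coeff_def inner_diff_self_div)
next
  case True
  have "max 0 (1 - net_bump P h x) \<le> 1" "max 0 (4 - (x - p) \<bullet> (x - p) / h\<^sup>2) \<le> 4"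
    using net_bump_nonneg[of P h x] by (auto simp: inner_diff_self_div)
  then have "\<bar>net_cutoff_coeff P h p x\<bar> \<le> 8 * 1 * 4 / (9 * h\<^sup>2)"
    unfolding net_cutoff_coeff_def abs_divide abs_mult
    by (simp only: abs_of_nonneg max.cobounded1 zero_le_power2 abs_neg_numeral abs_numeral)
       (intro divide_right_mono mult_mono; simp)
  moreover have "norm (x - p) \<le> 2 * h" using True by (simp add: dist_norm)
  ultimately have "\<bar>net_cutoff_coeff P h p x\<bar> * norm (x - p) \<le> 8 * 1 * 4 / (9 * h\<^sup>2) * (2 * h)"
    by (intro mult_mono) auto
  also have "\<dots> = 64 / (9 * h)" using assms by (simp add: power2_eq_square field_simps)
  finally show ?thesis using True by simp
qed

lemma net_cutoff_lipschitz:
  fixes P :: "'a::euclidean_space set"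
  assumes "0 < h" "finite P" and sep: "\<forall>p\<in>P. \<forall>q\<in>P. p \<noteq> q \<longrightarrow> h \<le> dist p q"
  shows "\<bar>net_cutoff P h x - net_cutoff P h y\<bar> \<le> 8 * 5 ^ DIM('a) / h * dist x y"
proof -
  let ?D = "\<lambda>x v. \<Sum>p\<in>P. net_cutoff_coeff P h p x * ((x - p) \<bullet> v)"
  have "onorm (?D x) \<le> 8 * 5 ^ DIM('a) / h" for x
  proof -
    have "onorm (?D x) \<le> (\<Sum>p\<in>P. \<bar>net_cutoff_coeff P h p x\<bar> * norm (x - p))"
    proof (rule onorm_le)
      fix v
      have "norm (?D x v) \<le> (\<Sum>p\<in>P. \<bar>net_cutoff_coeff P h p x\<bar> * norm (x - p) * norm v)"
        by (auto simp: abs_mult mult.assoc intro!: order_trans[OF sum_abs] sum_mono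
            mult_left_mono Cauchy_Schwarz_ineq2)
      then show "norm (?D x v) \<le> (\<Sum>p\<in>P. \<bar>net_cutoff_coeff P h p x\<bar> * norm (x - p)) * norm v"
        by (simp add: sum_distrib_right)
    qed
    also have "\<dots> \<le> (\<Sum>p\<in>P. if dist x p < 2 * h then 64 / (9 * h) else 0)"
      by (intro sum_mono net_cutoff_coeff_bound assms(1))
    also have "\<dots> = real (card {p\<in>P. dist x p < 2 * h}) * (64 / (9 * h))"
      using assms(2) by (simp add: sum.If_cases Int_def)
    also have "\<dots> \<le> 5 ^ DIM('a) * (64 / (9 * h))"
      using card_separated_in_ball_le[OF assms, of x] assms(1)
      by (intro mult_right_mono) (simp_all flip: of_nat_le_iff)
    also have "\<dots> \<le> 8 * 5 ^ DIM('a) / h" using assms(1) by (simp add: field_simps)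
    finally show ?thesis .
  qed
  then show ?thesis
    using differentiable_bound[of UNIV "net_cutoff P h" ?D "8 * 5 ^ DIM('a) / h" x y]
      has_derivative_net_cutoff[of h P] assms(1) by (simp add: dist_norm)
qed

lemma C1_on_UNIV_imp_continuous: "C1_on_UNIV u \<Longrightarrow> continuous_on UNIV u"
  unfolding C1_on_UNIV_def
  by (metis continuous_at_imp_continuous_on has_derivative_continuous)

lemma C1c_cutoff:
  fixes K \<Omega> :: "'a::euclidean_space set"
  assumes "compact K" "0 < \<delta>" and far: "\<And>x. x \<in> K \<Longrightarrow> \<delta> \<le> infdist x (- \<Omega>)"
  obtains u where "u \<in> C1c \<Omega>" "\<And>x. x \<in> K \<Longrightarrow> u x = 1" "\<And>x. 0 \<le> u x \<and> u x \<le> 1"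
    "\<And>x y. \<bar>u x - u y\<bar> \<le> 32 * 5 ^ DIM('a) / \<delta> * dist x y"
proof -
  define h where "h = \<delta> / 4"
  have h: "0 < h" using assms(2) by (simp add: h_def)
  obtain P where P: "finite P" "P \<subseteq> K" "\<And>x. x \<in> K \<Longrightarrow> \<exists>p\<in>P. dist x p < h"
    and sep: "\<forall>p\<in>P. \<forall>q\<in>P. p \<noteq> q \<longrightarrow> h \<le> dist p q"
    using compact_has_separated_net[OF assms(1) h] by blast
  define S where "S = (\<Union>p\<in>P. cball p (2 * h))"
  have "compact S" unfolding S_def using P(1) by (intro compact_UN) auto
  have "{x. net_cutoff P h x \<noteq> 0} \<subseteq> S"
  proof
    fix x assume "x \<in> {x. net_cutoff P h x \<noteq> 0}"
    then obtain p where "p \<in> P" "dist p x \<le> 2 * h"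
      using net_cutoff_nonzero_near[OF h] by (force simp: dist_commute)
    then show "x \<in> S" by (auto simp: S_def)
  qed
  then have supp: "closure {x. net_cutoff P h x \<noteq> 0} \<subseteq> S"
    using \<open>compact S\<close> by (simp add: closure_minimal compact_imp_closed)
  have "S \<subseteq> \<Omega>"
  proof
    fix x assume "x \<in> S"
    then obtain p where "p \<in> P" "dist p x \<le> \<delta> / 2" by (auto simp: S_def h_def)
    moreover have "infdist p (- \<Omega>) \<le> infdist x (- \<Omega>) + dist p x" by (rule infdist_triangle)
    ultimately have "0 < infdist x (- \<Omega>)" using far[of p] P(2) assms(2) by force
    then show "x \<in> \<Omega>" using infdist_zero[of x "- \<Omega>"] by (metis ComplI less_irrefl)
  qed
  have "compact (closure {x. net_cutoff P h x \<noteq> 0})"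
    using compact_Int_closed[OF \<open>compact S\<close> closed_closure, of "{x. net_cutoff P h x \<noteq> 0}"] supp
    by (simp add: Int_absorb1)
  then have "net_cutoff P h \<in> C1c \<Omega>"
    unfolding C1c_def using C1_on_UNIV_net_cutoff[of h P] h supp \<open>S \<subseteq> \<Omega>\<close> by auto
  moreover have "net_cutoff P h x = 1" if "x \<in> K" for x
    using P(3)[OF that] net_cutoff_eq_one[OF P(1)] by blast
  moreover have "\<bar>net_cutoff P h x - net_cutoff P h y\<bar> \<le> 32 * 5 ^ DIM('a) / \<delta> * dist x y" for x y
    using net_cutoff_lipschitz[OF h P(1) sep, of x y] by (simp add: h_def)
  ultimately show ?thesis
    using that net_cutoff_bounds by blast
qed

section \<open>Test functions concentrated away from the boundary\<close>

lemma measure_le_Sobden: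
  fixes u :: "'a::euclidean_space \<Rightarrow> real"
  assumes "2 * \<sigma> < real DIM('a)"
    and "\<Omega> \<in> sets lborel" and "emeasure lborel \<Omega> < \<infinity>"
    and "G \<in> sets lborel" and "G \<subseteq> \<Omega>"
    and "continuous_on UNIV u" and "\<And>x. \<bar>u x\<bar> \<le> 1" and "\<And>x. x \<in> G \<Longrightarrow> u x = 1"
  shows "measure lborel G powr ((real DIM('a) - 2 * \<sigma>) / real DIM('a)) \<le> Sobden \<sigma> \<Omega> u"
proof -
  have G_fin: "emeasure lborel G < \<infinity>"
    using emeasure_mono[OF assms(5,2)] assms(3) by simp
  define f where "f x = \<bar>u x\<bar> powr (2 * real DIM('a) / (real DIM('a) - 2 * \<sigma>))" for x
  have [measurable]: "f \<in> borel_measurable lborel"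
    unfolding f_def using borel_measurable_continuous_onI[OF assms(6)] by measurable
  have "\<bar>f x\<bar> \<le> 1" for x
    using assms(1,7) by (simp add: f_def powr_le1)
  then have "integrable lborel (\<lambda>x. indicator \<Omega> x *\<^sub>R f x)"
    using assms(3) by (intro integrableI_bounded_set_indicator[where B=1, OF assms(2)]) auto
  moreover have "integrable lborel (indicator G :: 'a \<Rightarrow> real)"
    using G_fin assms(4) by (simp add: integrable_indicator_iff)
  moreover have "indicator G x \<le> indicator \<Omega> x *\<^sub>R f x" for x
    using assms(5,8) by (auto simp: f_def indicator_def)
  ultimately have "(LINT x|lborel. indicator G x) \<le> (LINT x:\<Omega>|lborel. f x)"
    unfolding set_lebesgue_integral_def by (intro integral_mono) auto
  then have "measure lborel G \<le> (LINT x:\<Omega>|lborel. f x)"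
    using G_fin assms(4) by simp
  then show ?thesis
    unfolding Sobden_def f_def[symmetric] using assms(1) by (intro powr_mono2) auto
qed

lemma exists_compact_core:
  fixes \<Omega> :: "'a::euclidean_space set"
  assumes "open \<Omega>" and \<Omega>_fin: "emeasure lborel \<Omega> < \<infinity>"
    and layer: "(\<lambda>\<delta>. measure lebesgue {x \<in> \<Omega>. infdist x (- \<Omega>) < \<delta>}) \<in> o[at_right 0](\<lambda>\<delta>. \<delta> powr s)"
    and "0 < \<eta>"
  obtains \<delta> K E where "0 < \<delta>" "\<delta> < 1" "compact K" "\<And>x. x \<in> K \<Longrightarrow> \<delta> \<le> infdist x (- \<Omega>)"
    "E \<in> sets lborel" "\<Omega> - E \<subseteq> K" "emeasure lborel E \<le> ennreal (\<eta> * \<delta> powr s)"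
proof -
  have \<Omega>_sets: "\<Omega> \<in> sets lborel" using \<open>open \<Omega>\<close> by simp
  have "\<forall>\<^sub>F \<delta> in at_right 0. measure lebesgue {x \<in> \<Omega>. infdist x (- \<Omega>) < \<delta>}
      \<le> \<eta> / 2 * \<delta> powr s"
    using landau_o.smallD[OF layer, of "\<eta> / 2"] \<open>0 < \<eta>\<close> by simp
  then obtain b where "0 < b" and b: "\<And>\<delta>. 0 < \<delta> \<Longrightarrow> \<delta> < b \<Longrightarrow>
      measure lebesgue {x \<in> \<Omega>. infdist x (- \<Omega>) < \<delta>} \<le> \<eta> / 2 * \<delta> powr s"
    unfolding eventually_at_right_field by auto
  define \<delta> where "\<delta> = min (b / 2) (1 / 2)"
  have \<delta>: "0 < \<delta>" "\<delta> < b" "\<delta> < 1" using \<open>0 < b\<close> by (auto simp: \<delta>_def)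
  define L where "L = {x \<in> \<Omega>. infdist x (- \<Omega>) < \<delta>}"
  have "continuous_on UNIV (\<lambda>x. infdist x (- \<Omega>))"
    by (intro continuous_intros)
  then have "open {x. infdist x (- \<Omega>) < \<delta>}" "closed {x. \<delta> \<le> infdist x (- \<Omega>)}"
    by (auto intro: open_Collect_less closed_Collect_le continuous_on_const)
  then have L_sets: "L \<in> sets lborel"
    using \<open>open \<Omega>\<close> by (auto simp: L_def Collect_conj_eq intro: borel_open)
  have "emeasure lborel L < \<infinity>"
    using emeasure_mono[OF _ \<Omega>_sets, of L] \<Omega>_fin by (auto simp: L_def)
  moreover have "measure lborel L \<le> \<eta> / 2 * \<delta> powr s"
    using b[OF \<delta>(1,2)] measure_completion[OF L_sets] by (simp add: L_def)
  ultimately have L_small: "emeasure lborel L \<le> ennreal (\<eta> / 2 * \<delta> powr s)"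
    by (simp add: emeasure_eq_ennreal_measure ennreal_leI)
  obtain R where R_small: "emeasure lborel (\<Omega> - cball 0 R) < ennreal (\<eta> / 2 * \<delta> powr s)"
    using emeasure_diff_cball_small[OF \<Omega>_sets \<Omega>_fin, of "ennreal (\<eta> / 2 * \<delta> powr s)"]
      \<delta>(1) \<open>0 < \<eta>\<close> by auto
  define K where "K = {x. \<delta> \<le> infdist x (- \<Omega>)} \<inter> cball 0 R"
  define E where "E = L \<union> (\<Omega> - cball 0 R)"
  show ?thesis
  proof (rule that[of \<delta> K E])
    show "compact K"
      unfolding K_def using \<open>closed {x. \<delta> \<le> infdist x (- \<Omega>)}\<close> by (intro closed_Int_compact) auto
    show "E \<in> sets lborel"
      using L_sets \<Omega>_sets by (auto simp: E_def)
    have "emeasure lborel E \<le> emeasure lborel L + emeasure lborel (\<Omega> - cball 0 R)"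
      unfolding E_def using L_sets \<Omega>_sets by (intro emeasure_subadditive) auto
    also have "\<dots> \<le> ennreal (\<eta> / 2 * \<delta> powr s) + ennreal (\<eta> / 2 * \<delta> powr s)"
      using L_small R_small by (intro add_mono) auto
    finally show "emeasure lborel E \<le> ennreal (\<eta> * \<delta> powr s)"
      using \<open>0 < \<eta>\<close> by (simp flip: ennreal_plus)
  qed (use \<delta> in \<open>auto simp: K_def E_def L_def\<close>)
qed

lemma exists_test_function:
  fixes \<Omega> :: "'a::euclidean_space set"
  assumes "0 \<le> \<sigma>" "2 * \<sigma> < real DIM('a)"
    and "open \<Omega>" and \<Omega>_fin: "emeasure lborel \<Omega> < \<infinity>"
    and layer: "(\<lambda>\<delta>. measure lebesgue {x \<in> \<Omega>. infdist x (- \<Omega>) < \<delta>})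
                  \<in> o[at_right 0](\<lambda>\<delta>. \<delta> powr (2 * \<sigma>))"
    and "0 < \<eta>" "\<eta> \<le> measure lborel \<Omega> / 2"
  obtains u where "u \<in> C1c \<Omega>"
    "Iform \<sigma> \<Omega> u \<le> ennreal \<eta> * (2 * ennreal ((32 * 5 ^ DIM('a)) powr (2 * \<sigma>))
        * (\<integral>\<^sup>+ z. lipschitz_kernel 1 \<sigma> (z::'a) \<partial>lborel))"
    "(measure lborel \<Omega> / 2) powr ((real DIM('a) - 2 * \<sigma>) / real DIM('a)) \<le> Sobden \<sigma> \<Omega> u"
proof -
  let ?A = "32 * 5 ^ DIM('a) :: real"
  let ?Kf = "\<integral>\<^sup>+ z. lipschitz_kernel 1 \<sigma> (z::'a) \<partial>lborel"
  have \<Omega>_sets: "\<Omega> \<in> sets lborel" using \<open>open \<Omega>\<close> by simp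
  obtain \<delta> K E where \<delta>: "0 < \<delta>" "\<delta> < 1" and "compact K"
    and far: "\<And>x. x \<in> K \<Longrightarrow> \<delta> \<le> infdist x (- \<Omega>)" and E_sets: "E \<in> sets lborel"
    and core: "\<Omega> - E \<subseteq> K" and E_small: "emeasure lborel E \<le> ennreal (\<eta> * \<delta> powr (2 * \<sigma>))"
    using exists_compact_core[OF \<open>open \<Omega>\<close> \<Omega>_fin layer \<open>0 < \<eta>\<close>] by blast
  obtain u where "u \<in> C1c \<Omega>" and u_K: "\<And>x. x \<in> K \<Longrightarrow> u x = 1" and u_01: "\<And>x. 0 \<le> u x \<and> u x \<le> 1"
    and u_lip: "\<And>x y. \<bar>u x - u y\<bar> \<le> ?A / \<delta> * dist x y"
    using C1c_cutoff[OF \<open>compact K\<close> \<delta>(1) far] by blast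
  have "Iform \<sigma> \<Omega> u \<le> 2 * emeasure lborel E * (ennreal ((?A / \<delta>) powr (2 * \<sigma>)) * ?Kf)"
  proof (rule Iform_le_lipschitz_kernel[OF _ u_lip _ E_sets])
    show "\<bar>u x - u y\<bar> \<le> 1" for x y using u_01[of x] u_01[of y] by auto
    show "u x = u y" if "x \<in> \<Omega>" "y \<in> \<Omega>" "x \<notin> E" "y \<notin> E" for x y
      using that core by (simp add: u_K subset_iff)
  qed (use \<delta> in simp)
  also have "\<dots> \<le> 2 * ennreal (\<eta> * \<delta> powr (2 * \<sigma>)) * (ennreal ((?A / \<delta>) powr (2 * \<sigma>)) * ?Kf)"
    using E_small by (intro mult_right_mono mult_left_mono) auto
  also have "\<dots> = 2 * (ennreal (\<eta> * \<delta> powr (2 * \<sigma>)) * ennreal ((?A / \<delta>) powr (2 * \<sigma>))) * ?Kf"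
    by (simp only: ac_simps)
  also have "ennreal (\<eta> * \<delta> powr (2 * \<sigma>)) * ennreal ((?A / \<delta>) powr (2 * \<sigma>))
      = ennreal \<eta> * ennreal (?A powr (2 * \<sigma>))"
    using \<delta> \<open>0 < \<eta>\<close> by (simp add: powr_divide flip: ennreal_mult)
  also have "2 * (ennreal \<eta> * ennreal (?A powr (2 * \<sigma>))) * ?Kf
      = ennreal \<eta> * (2 * ennreal (?A powr (2 * \<sigma>)) * ?Kf)"
    by (simp only: ac_simps)
  finally have Iform_small: "Iform \<sigma> \<Omega> u \<le> ennreal \<eta> * (2 * ennreal (?A powr (2 * \<sigma>)) * ?Kf)" .
  have "measure lborel \<Omega> / 2 \<le> measure lborel (\<Omega> - E)"
  proof -
    have fin: "emeasure lborel (\<Omega> - E) < \<infinity>"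
      using emeasure_mono[OF _ \<Omega>_sets, of "\<Omega> - E"] \<Omega>_fin by auto
    have "\<eta> * \<delta> powr (2 * \<sigma>) \<le> \<eta>"
      using \<delta> \<open>0 < \<eta>\<close> assms(1) by (simp add: powr_le1 mult_left_le)
    have "emeasure lborel \<Omega> \<le> emeasure lborel (\<Omega> - E) + emeasure lborel E"
      using \<Omega>_sets E_sets by (intro order_trans[OF emeasure_mono emeasure_subadditive]) auto
    also have "\<dots> \<le> ennreal (measure lborel (\<Omega> - E)) + ennreal \<eta>"
      using fin E_small \<open>\<eta> * \<delta> powr (2 * \<sigma>) \<le> \<eta>\<close>
      by (intro add_mono) (auto simp: emeasure_eq_ennreal_measure intro: order_trans ennreal_leI)
    also have "\<dots> = ennreal (measure lborel (\<Omega> - E) + \<eta>)"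
      using \<open>0 < \<eta>\<close> by (simp flip: ennreal_plus)
    finally have "ennreal (measure lborel \<Omega>) \<le> ennreal (measure lborel (\<Omega> - E) + \<eta>)"
      using \<Omega>_fin by (subst (asm) emeasure_eq_ennreal_measure) auto
    then have "measure lborel \<Omega> \<le> measure lborel (\<Omega> - E) + \<eta>"
      using \<open>0 < \<eta>\<close> by (subst (asm) ennreal_le_iff) auto
    then show ?thesis using assms(7) by linarith
  qed
  then have "(measure lborel \<Omega> / 2) powr ((real DIM('a) - 2 * \<sigma>) / real DIM('a))
      \<le> measure lborel (\<Omega> - E) powr ((real DIM('a) - 2 * \<sigma>) / real DIM('a))"
    using assms(2) by (intro powr_mono2) auto
  also have "\<dots> \<le> Sobden \<sigma> \<Omega> u"
  proof (rule measure_le_Sobden[OF assms(2) \<Omega>_sets \<Omega>_fin])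
    show "continuous_on UNIV u"
      using \<open>u \<in> C1c \<Omega>\<close> by (simp add: C1c_def C1_on_UNIV_imp_continuous)
  qed (use E_sets \<Omega>_sets u_01 u_K core in auto)
  finally show ?thesis using that \<open>u \<in> C1c \<Omega>\<close> Iform_small by blast
qed

lemma exists_test_function_ratio_le:
  fixes \<Omega> :: "'a::euclidean_space set"
  assumes "0 < \<sigma>" "\<sigma> < 1/2" "open \<Omega>" "\<Omega> \<noteq> {}" "emeasure lborel \<Omega> < \<infinity>"
    and layer: "(\<lambda>\<delta>. measure lebesgue {x \<in> \<Omega>. infdist x (- \<Omega>) < \<delta>})
                  \<in> o[at_right 0](\<lambda>\<delta>. \<delta> powr (2 * \<sigma>))"
    and "0 < \<epsilon>"
  shows "\<exists>u \<in> C1c \<Omega> - {\<lambda>x. 0}. Iform \<sigma> \<Omega> u / ennreal (Sobden \<sigma> \<Omega> u) \<le> ennreal \<epsilon>"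
proof -
  let ?C = "2 * ennreal ((32 * 5 ^ DIM('a)) powr (2 * \<sigma>))
      * (\<integral>\<^sup>+ z. lipschitz_kernel 1 \<sigma> (z::'a) \<partial>lborel)"
  let ?q = "(real DIM('a) - 2 * \<sigma>) / real DIM('a)"
  have "2 * \<sigma> < real DIM('a)" using assms(2) DIM_positive[where 'a='a] by linarith
  have "(\<integral>\<^sup>+ z. lipschitz_kernel 1 \<sigma> (z::'a) \<partial>lborel) < \<infinity>"
    using assms(1,2) by (intro nn_integral_lipschitz_kernel_finite) auto
  then have "?C < \<infinity>"
    by (simp add: ennreal_mult_less_top)
  then obtain c where c: "?C = ennreal c" "0 \<le> c" by (cases ?C rule: ennreal_cases) auto
  define B where "B = measure lborel \<Omega> / 2"
  have "0 < B" using measure_pos_if_open[OF assms(3-5)] by (simp add: B_def)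
  define \<eta> where "\<eta> = min B (\<epsilon> * B powr ?q / (c + 1))"
  have "0 < \<eta>" using \<open>0 < B\<close> \<open>0 < \<epsilon>\<close> c(2) by (simp add: \<eta>_def)
  have "\<eta> \<le> measure lborel \<Omega> / 2" unfolding \<eta>_def B_def by (rule min.cobounded1)
  obtain u where "u \<in> C1c \<Omega>" and Iform_le: "Iform \<sigma> \<Omega> u \<le> ennreal \<eta> * ?C"
    and Sob: "(measure lborel \<Omega> / 2) powr ?q \<le> Sobden \<sigma> \<Omega> u"
    by (rule exists_test_function[OF less_imp_le[OF assms(1)] \<open>2 * \<sigma> < real DIM('a)\<close> assms(3,5)
          layer \<open>0 < \<eta>\<close> \<open>\<eta> \<le> measure lborel \<Omega> / 2\<close>])
  have Iform_small: "Iform \<sigma> \<Omega> u \<le> ennreal (\<eta> * c)"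
    using Iform_le \<open>0 < \<eta>\<close> c by (simp add: ennreal_mult)
  have "0 < B powr ?q" using \<open>0 < B\<close> by simp
  then have "0 < Sobden \<sigma> \<Omega> u" using Sob unfolding B_def by linarith
  moreover have "Sobden \<sigma> \<Omega> (\<lambda>x. 0) = 0" by (simp add: Sobden_def)
  ultimately have "u \<noteq> (\<lambda>x. 0)" by auto
  have "Iform \<sigma> \<Omega> u / ennreal (Sobden \<sigma> \<Omega> u) \<le> ennreal (\<eta> * c / Sobden \<sigma> \<Omega> u)"
    using divide_right_mono_ennreal[OF Iform_small, of "ennreal (Sobden \<sigma> \<Omega> u)"]
      divide_ennreal[of "\<eta> * c" "Sobden \<sigma> \<Omega> u"] \<open>0 < Sobden \<sigma> \<Omega> u\<close> \<open>0 < \<eta>\<close> c(2)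
    by simp
  also have "\<dots> \<le> ennreal \<epsilon>"
  proof (rule ennreal_leI)
    have "\<eta> * c \<le> \<epsilon> * B powr ?q / (c + 1) * c"
      using c(2) by (intro mult_right_mono) (auto simp: \<eta>_def)
    also have "\<dots> = \<epsilon> * B powr ?q * (c / (c + 1))" by simp
    also have "\<dots> \<le> \<epsilon> * B powr ?q"
      using \<open>0 < \<epsilon>\<close> c(2) by (intro mult_left_le) auto
    also have "\<dots> \<le> \<epsilon> * Sobden \<sigma> \<Omega> u" using Sob \<open>0 < \<epsilon>\<close> by (simp add: B_def)
    finally show "\<eta> * c / Sobden \<sigma> \<Omega> u \<le> \<epsilon>"
      using \<open>0 < Sobden \<sigma> \<Omega> u\<close> by (simp add: divide_le_eq)
  qed
  finally show ?thesis using \<open>u \<in> C1c \<Omega>\<close> \<open>u \<noteq> (\<lambda>x. 0)\<close> by blast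
qed

theorem lemmaA2:
  fixes \<Omega> :: "'a::euclidean_space set" and \<sigma> :: real
  assumes "0 < \<sigma>" and "\<sigma> < 1/2"
    and "open \<Omega>" and "\<Omega> \<noteq> {}"
    and "\<Omega> \<in> sets lebesgue" and "emeasure lebesgue \<Omega> < \<infinity>"
    and "(\<lambda>\<delta>. measure lebesgue {x \<in> \<Omega>. infdist x (- \<Omega>) < \<delta>})
           \<in> o[at_right 0](\<lambda>\<delta>. \<delta> powr (2 * \<sigma>))"
  shows "(INF u \<in> C1c \<Omega> - {\<lambda>x. 0}. Iform \<sigma> \<Omega> u / ennreal (Sobden \<sigma> \<Omega> u)) = 0"
proof -
  have "\<Omega> \<in> sets lborel" using assms(3) by simp
  then have "emeasure lborel \<Omega> < \<infinity>"
    using assms(6) by simp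
  note ratio_small = exists_test_function_ratio_le[OF assms(1-4) this assms(7)]
  define ratio where "ratio u = Iform \<sigma> \<Omega> u / ennreal (Sobden \<sigma> \<Omega> u)" for u
  have "(INF u \<in> C1c \<Omega> - {\<lambda>x. 0}. ratio u) \<le> 0"
  proof (rule ennreal_le_epsilon)
    fix \<epsilon> :: real assume "0 < \<epsilon>"
    then obtain u where "u \<in> C1c \<Omega> - {\<lambda>x. 0}" "ratio u \<le> ennreal \<epsilon>"
      using ratio_small unfolding ratio_def by blast
    then show "(INF u \<in> C1c \<Omega> - {\<lambda>x. 0}. ratio u) \<le> 0 + ennreal \<epsilon>"
      by (simp add: INF_lower2)
  qed
  then show ?thesis unfolding ratio_def by (simp add: antisym)
qed

end
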